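(* Let $d\ge3$ and $n=d+1$. The maximum size of a family $\mathcal{A}\subset2^{[n]}$ with $\mathrm{VC}(\mathcal{A}\cap\mathcal{A})\le d$ and $\mathrm{VC}(\mathcal{A}\cup\mathcal{A})\le d$ is $2^n-2$.
   Context: $[n]=\{1,\dots,n\}$. $\mathrm{VC}(\mathcal{F})$ is the largest cardinality of a $Y\subset[n]$ with $\{S\cap Y:S\in\mathcal{F}\}=2^Y$. $\mathcal{A}\cap\mathcal{A}=\{S\cap T:S,T\in\mathcal{A}\}$ and $\mathcal{A}\cup\mathcal{A}=\{S\cup T:S,T\in\mathcal{A}\}$. *)

theory Defs
  imports Main
begin

definition shatters :: "nat set set \<Rightarrow> nat set \<Rightarrow> bool" where
  "shatters F Y \<longleftrightarrow> (\<lambda>S. S \<inter> Y) ` F = Pow Y"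

text \<open>VC dimension over ground set [n] = {1..n}: largest cardinality of a shattered Y \<subseteq> [n]
  (Sup of a finite set of naturals; 0 if nothing is shattered, i.e. F empty).\<close>
definition VC :: "nat \<Rightarrow> nat set set \<Rightarrow> nat" where
  "VC n F = Sup {card Y | Y. Y \<subseteq> {1..n} \<and> shatters F Y}"

definition fam_inter :: "nat set set \<Rightarrow> nat set set" where
  "fam_inter A = {S \<inter> T | S T. S \<in> A \<and> T \<in> A}"

definition fam_union :: "nat set set \<Rightarrow> nat set set" where
  "fam_union A = {S \<union> T | S T. S \<in> A \<and> T \<in> A}"

end

theory Submission
  imports Defs
begin

text \<open>On the ground set [n] the bound VC \<le> n - 1 only forbids shattering [n] itself, which for a
  family of subsets of [n] means being all of 2^[n]. So the conditions say exactly that neither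
  A \<inter> A nor A \<union> A is the whole power set. Removing \<emptyset> and [n] achieves this. Conversely,
  if A misses at most one set X, then X is the intersection of two one-point enlargements
  (if its complement has two points) or the union of two one-point reductions (if it has two
  points itself); as n \<ge> 3, one of these occurs, so A \<inter> A or A \<union> A is everything.\<close>

lemma shatters_iff_eq_Pow:
  assumes "F \<subseteq> Pow Y"
  shows "shatters F Y \<longleftrightarrow> F = Pow Y"
proof -
  have "(\<lambda>S. S \<inter> Y) ` F = id ` F"
    using assms by (intro image_cong) auto
  then show ?thesis
    unfolding shatters_def by simp
qed

lemma Sup_nat_le_iff:
  fixes S :: "nat set"
  assumes "finite S"
  shows "Sup S \<le> d \<longleftrightarrow> (\<forall>x\<in>S. x \<le> d)"
  using assms by (cases "S = {}") (simp_all add: Sup_nat_def)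

lemma VC_le_iff:
  "VC n F \<le> d \<longleftrightarrow> (\<forall>Y. Y \<subseteq> {1..n} \<and> shatters F Y \<longrightarrow> card Y \<le> d)"
proof -
  have "{card Y | Y. Y \<subseteq> {1..n} \<and> shatters F Y} \<subseteq> card ` Pow {1..n}"
    by auto
  then have "finite {card Y | Y. Y \<subseteq> {1..n} \<and> shatters F Y}"
    by (rule finite_subset) simp
  then have "VC n F \<le> d \<longleftrightarrow> (\<forall>k\<in>{card Y | Y. Y \<subseteq> {1..n} \<and> shatters F Y}. k \<le> d)"
    unfolding VC_def by (rule Sup_nat_le_iff)
  then show ?thesis
    by blast
qed

lemma VC_le_iff_ne_Pow:
  assumes "F \<subseteq> Pow {1..d + 1}"
  shows "VC (d + 1) F \<le> d \<longleftrightarrow> F \<noteq> Pow {1..d + 1}"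
proof -
  have full: "Y = {1..d + 1}" if "Y \<subseteq> {1..d + 1}" "d < card Y" for Y
  proof -
    have "card Y \<le> card {1..d + 1}"
      using that(1) by (intro card_mono) auto
    then have "card Y = card {1..d + 1}"
      using that(2) by simp
    then show ?thesis
      using that(1) by (intro card_subset_eq) auto
  qed
  have "VC (d + 1) F \<le> d \<longleftrightarrow> \<not> shatters F {1..d + 1}"
  proof
    assume "VC (d + 1) F \<le> d"
    then show "\<not> shatters F {1..d + 1}"
      unfolding VC_le_iff by force
  next
    assume "\<not> shatters F {1..d + 1}"
    then show "VC (d + 1) F \<le> d"
      unfolding VC_le_iff using full not_le by blast
  qed
  then show ?thesis
    using shatters_iff_eq_Pow[OF assms] by simp
qed

lemma subset_fam_inter: "A \<subseteq> fam_inter A"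
  unfolding fam_inter_def by force

lemma subset_fam_union: "A \<subseteq> fam_union A"
  unfolding fam_union_def by force

lemma fam_inter_subset_Pow: "A \<subseteq> Pow U \<Longrightarrow> fam_inter A \<subseteq> Pow U"
  unfolding fam_inter_def by auto

lemma fam_union_subset_Pow: "A \<subseteq> Pow U \<Longrightarrow> fam_union A \<subseteq> Pow U"
  unfolding fam_union_def by auto

lemma top_notin_fam_inter: "U \<notin> fam_inter (Pow U - {{}, U})"
  unfolding fam_inter_def by auto

lemma empty_notin_fam_union: "{} \<notin> fam_union (Pow U - {{}, U})"
  unfolding fam_union_def by auto

lemma card_Pow_minus_empty_top:
  assumes "finite U" "U \<noteq> {}"
  shows "card (Pow U - {{}, U}) = 2 ^ card U - 2"
proof -
  have "card (Pow U - {{}, U}) = card (Pow U) - card {{}, U}"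
    by (rule card_Diff_subset) auto
  then show ?thesis
    using assms by (simp add: card_Pow)
qed

lemma insert_insert_mem_fam_inter:
  assumes "insert a X \<in> A" "insert b X \<in> A" "a \<notin> X" "b \<notin> X" "a \<noteq> b"
  shows "X \<in> fam_inter A"
proof -
  have "X = insert a X \<inter> insert b X"
    using assms(3-5) by auto
  then show ?thesis
    using assms(1,2) unfolding fam_inter_def by blast
qed

lemma remove_remove_mem_fam_union:
  assumes "X - {a} \<in> A" "X - {b} \<in> A" "a \<in> X" "b \<in> X" "a \<noteq> b"
  shows "X \<in> fam_union A"
proof -
  have "X = (X - {a}) \<union> (X - {b})"
    using assms(3-5) by auto
  then show ?thesis
    using assms(1,2) unfolding fam_union_def by blast
qed

lemma two_elements_if_card_ge_2:
  assumes "finite S" "2 \<le> card S"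
  obtains a b where "a \<in> S" "b \<in> S" "a \<noteq> b"
  using assms by (metis card_le_Suc0_iff_eq not_less_eq_eq numeral_2_eq_2)

lemma Pow_minus_singleton_fam_inter_or_fam_union:
  assumes "finite U" "3 \<le> card U" "X \<subseteq> U"
  shows "X \<in> fam_inter (Pow U - {X}) \<or> X \<in> fam_union (Pow U - {X})"
proof (cases "2 \<le> card (U - X)")
  case True
  then obtain a b where "a \<in> U - X" "b \<in> U - X" "a \<noteq> b"
    using assms(1) by (meson finite_Diff two_elements_if_card_ge_2)
  then have "X \<in> fam_inter (Pow U - {X})"
    using assms(3) by (intro insert_insert_mem_fam_inter) auto
  then show ?thesis ..
next
  case False
  have "card U = card (U - X) + card X"
    using assms by (metis card_Diff_subset card_mono finite_subset le_add_diff_inverse2)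
  then have "2 \<le> card X"
    using False assms(2) by linarith
  then obtain a b where "a \<in> X" "b \<in> X" "a \<noteq> b"
    using assms by (meson finite_subset two_elements_if_card_ge_2)
  then have "X \<in> fam_union (Pow U - {X})"
    using assms(3) by (intro remove_remove_mem_fam_union) auto
  then show ?thesis ..
qed

lemma fam_inter_or_fam_union_eq_Pow:
  assumes "finite U" "3 \<le> card U" "A \<subseteq> Pow U" "2 ^ card U - 2 < card A"
  shows "fam_inter A = Pow U \<or> fam_union A = Pow U"
proof (cases "A = Pow U")
  case True
  then show ?thesis
    using subset_fam_inter fam_inter_subset_Pow by blast
next
  case False
  then obtain X where X: "X \<subseteq> U" "X \<notin> A"
    using assms(3) by blast
  have "card A \<le> card (Pow U - {X})"
    using assms(1,3) X by (intro card_mono) auto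
  moreover have "card (Pow U - {X}) = 2 ^ card U - 1"
    using assms(1) X by (simp add: card_Pow)
  ultimately have "A = Pow U - {X}"
    using assms(1,3,4) X by (intro card_subset_eq) auto
  then show ?thesis
    using Pow_minus_singleton_fam_inter_or_fam_union[OF assms(1,2) X(1)]
      subset_fam_inter[of A] subset_fam_union[of A]
      fam_inter_subset_Pow[OF assms(3)] fam_union_subset_Pow[OF assms(3)]
    by blast
qed

theorem mainTheorem10:
  fixes d n :: nat
  assumes "d \<ge> 3" and "n = d + 1"
  shows "(\<exists>A. A \<subseteq> Pow {1..n} \<and> VC n (fam_inter A) \<le> d \<and> VC n (fam_union A) \<le> d
              \<and> card A = 2 ^ n - 2)
       \<and> (\<forall>A. A \<subseteq> Pow {1..n} \<and> VC n (fam_inter A) \<le> d \<and> VC n (fam_union A) \<le> d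
              \<longrightarrow> card A \<le> 2 ^ n - 2)"
proof
  have VC_iff: "VC n F \<le> d \<longleftrightarrow> F \<noteq> Pow {1..n}" if "F \<subseteq> Pow {1..n}" for F
    using that VC_le_iff_ne_Pow[of F d] assms(2) by simp
  let ?A = "Pow {1..n} - {{}, {1..n}}"
  have A: "?A \<subseteq> Pow {1..n}"
    by blast
  have "VC n (fam_inter ?A) \<le> d"
    using VC_iff[OF fam_inter_subset_Pow[OF A]] top_notin_fam_inter by blast
  moreover have "VC n (fam_union ?A) \<le> d"
    using VC_iff[OF fam_union_subset_Pow[OF A]] empty_notin_fam_union by blast
  moreover have "card ?A = 2 ^ n - 2"
    using card_Pow_minus_empty_top[of "{1..n}"] assms(2) by simp
  ultimately show "\<exists>A. A \<subseteq> Pow {1..n} \<and> VC n (fam_inter A) \<le> d \<and> VC n (fam_union A) \<le> d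
      \<and> card A = 2 ^ n - 2"
    using A by blast
  show "\<forall>A. A \<subseteq> Pow {1..n} \<and> VC n (fam_inter A) \<le> d \<and> VC n (fam_union A) \<le> d
      \<longrightarrow> card A \<le> 2 ^ n - 2"
  proof (intro allI impI, elim conjE)
    fix A assume A: "A \<subseteq> Pow {1..n}" "VC n (fam_inter A) \<le> d" "VC n (fam_union A) \<le> d"
    then have "fam_inter A \<noteq> Pow {1..n}" "fam_union A \<noteq> Pow {1..n}"
      using VC_iff fam_inter_subset_Pow fam_union_subset_Pow by auto
    then show "card A \<le> 2 ^ n - 2"
      using fam_inter_or_fam_union_eq_Pow[of "{1..n}" A] A(1) assms by fastforce
  qed
qed

end
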